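(* Let $\varepsilon>0$ be small, $x$ large, $0\le\theta\le\frac1{30}$, $\rho=\frac37(1-4\theta)-\varepsilon$, and $z_2\le x^{1/3-2\theta-2\varepsilon^2}$. Let $$\mathcal{D}^{-,\mathrm{SEM}}=\{p_1\cdots p_r\le x^{\rho}:\ z_2\ge p_1>\dots>p_r,\ p_1\cdots p_{2k-1}p_{2k}^2\le x^{\rho}\text{ for all }k\ge1\}$$ ($p_i$ primes). Then for any $D\in[x^{1/3-2\theta-2\varepsilon^2},x^{\rho}]$, every $d\in\mathcal{D}^{-,\mathrm{SEM}}$ can be written as $d=d_1d_2$ with positive integers $d_1,d_2$ satisfying $d_1\le D$ and $d_1d_2^2\le x^{1-4\theta-2\varepsilon^2}/D$; moreover one can take either $d_1\ge x^{0.1}$ or $d_2=1$.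
   Context: Conditions in the definition of $\mathcal{D}^{-,\mathrm{SEM}}$ involving indices larger than $r$ are vacuous. *)

theory Defs
  imports Complex_Main "HOL-Computational_Algebra.Primes"
begin

text \<open>The primes are given as a list
  ps = [p_1, ..., p_r] (0-indexed: ps!(i-1) = p_i).\<close>
definition D_minus_SEM :: "real \<Rightarrow> real \<Rightarrow> real \<Rightarrow> nat set" where
  "D_minus_SEM x \<rho> z2 = {prod_list ps | ps.
      ps \<noteq> [] \<and> (\<forall>p\<in>set ps. prime p) \<and> sorted_wrt (>) ps \<and>
      real (hd ps) \<le> z2 \<and> real (prod_list ps) \<le> x powr \<rho> \<and>
      (\<forall>k\<ge>1. 2 * k \<le> length ps \<longrightarrow>
          real (prod_list (take (2 * k - 1) ps) * (ps ! (2 * k - 1))^2) \<le> x powr \<rho>)}"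

end

theory Submission
  imports Defs
begin

text \<open>Write \<open>d = p\<^sub>1 \<cdots> p\<^sub>r\<close> with \<open>p\<^sub>1 > \<dots> > p\<^sub>r\<close>, \<open>R = x powr \<rho>\<close> and
  \<open>W = x powr (1 - 4\<theta> - 2\<epsilon>^2) / R^2\<close>. If \<open>d \<le> D\<close> take \<open>d\<^sub>1 = d\<close>. Otherwise every prime
  after \<open>p\<^sub>2\<close> is at most \<open>W\<close>, since \<open>q < p\<^sub>2 < p\<^sub>1\<close> gives \<open>q^3 < d \<le> R \<le> W^3\<close>. Put \<open>p\<^sub>1\<close>
  (and also \<open>p\<^sub>2\<close> if \<open>p\<^sub>1 p\<^sub>2 \<le> D\<close>) into \<open>d\<^sub>1\<close> and add further primes as long as \<open>d\<^sub>1 \<le> D\<close>.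
  If some prime \<open>q\<close> is left over, then \<open>d\<^sub>1 q > D\<close>, so \<open>d\<^sub>1 > D / W \<ge> x powr (1/10)\<close> and
  \<open>d\<^sub>1 d\<^sub>2^2 D < (d\<^sub>1 d\<^sub>2)^2 q \<le> R^2 W\<close>. If none is left over but \<open>p\<^sub>2\<close> went into \<open>d\<^sub>2\<close>, then
  \<open>d\<^sub>1 d\<^sub>2^2 D < d p\<^sub>1 p\<^sub>2^2 \<le> R^2\<close> by the condition for \<open>k = 1\<close>, and \<open>d\<^sub>1 \<ge> p\<^sub>1 > \<surd>D\<close>.\<close>

lemma distinct_if_sorted_wrt_greater: "sorted_wrt (>) xs \<Longrightarrow> distinct (xs :: 'a::linorder list)"
  by (induction xs) auto

lemma exists_maximal_subproduct:
  fixes S :: "nat set" and c :: nat and D :: real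
  assumes "finite S" and "\<forall>q\<in>S. 1 < q" and "real c \<le> D"
  shows "\<exists>A\<subseteq>S. real (c * \<Prod>A) \<le> D \<and> (\<forall>q\<in>S - A. real (c * \<Prod>A) * real q > D)"
proof -
  let ?admissible = "\<lambda>A. A \<subseteq> S \<and> real (c * \<Prod>A) \<le> D"
  have pos: "0 < \<Prod>A" if "A \<subseteq> S" for A
  proof (rule prod_pos)
    show "0 < q" if "q \<in> A" for q
      using assms(2) \<open>A \<subseteq> S\<close> \<open>q \<in> A\<close> by force
  qed
  have "\<Prod>A < Suc (\<Prod>S)" if "A \<subseteq> S" for A
    using dvd_imp_le[OF prod_dvd_prod_subset[OF \<open>finite S\<close> that] pos[of S]] by simp
  then have "\<exists>A. ?admissible A \<and> (\<forall>A'. ?admissible A' \<longrightarrow> \<Prod>A' \<le> \<Prod>A)"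
    using assms(3) by (intro ex_has_greatest_nat[where k = "{}" and b = "Suc (\<Prod>S)"]) auto
  then obtain A where A: "A \<subseteq> S" "real (c * \<Prod>A) \<le> D"
    and max: "\<And>A'. ?admissible A' \<Longrightarrow> \<Prod>A' \<le> \<Prod>A"
    by blast
  have "real (c * \<Prod>A) * real q > D" if q: "q \<in> S - A" for q
  proof (rule ccontr)
    assume "\<not> ?thesis"
    have "finite A"
      using A(1) assms(1) finite_subset by blast
    then have insert: "\<Prod>(insert q A) = q * \<Prod>A"
      using q by simp
    then have "real (c * \<Prod>(insert q A)) = real (c * \<Prod>A) * real q"
      by simp
    with \<open>\<not> ?thesis\<close> have "?admissible (insert q A)"
      using A(1) q by auto
    from max[OF this] have "q * \<Prod>A \<le> 1 * \<Prod>A"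
      using insert by simp
    moreover have "1 < q"
      using assms(2) q by blast
    ultimately show False
      using pos[OF A(1)] by simp
  qed
  then show ?thesis
    using A by blast
qed

lemma remaining_prime_le_cube_root:
  fixes p1 p2 q :: nat and rest :: "nat list" and W :: real
  assumes "sorted_wrt (>) (p1 # p2 # rest)" and "\<forall>p\<in>set rest. 0 < p"
    and "real (prod_list (p1 # p2 # rest)) \<le> W ^ 3" and "q \<in> set rest"
  shows "real q \<le> W"
proof -
  have "prod_list rest \<noteq> 0"
    using assms(2) by (auto simp: prod_list_zero_iff)
  then have "q \<le> prod_list rest"
    using assms(4) by (intro dvd_imp_le prod_list_dvd) auto
  moreover have "q * q < p1 * p2"
    using assms(1,4) by (intro mult_strict_mono) auto
  ultimately have "q * q * q < p1 * p2 * prod_list rest"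
    using assms(2,4) mult_less_le_imp_less[of "q * q" "p1 * p2" q "prod_list rest"] by auto
  then have cubes: "real q ^ 3 < W ^ 3"
    using assms(3) by (simp add: power3_eq_cube flip: of_nat_mult)
  then have "0 < W ^ 3"
    using zero_le_power[of "real q" 3] by linarith
  then have "0 \<le> W"
    by (simp add: zero_less_power_eq)
  then show ?thesis
    using power_less_imp_less_base[OF cubes] by linarith
qed

lemma split_bounds_of_overshooting_factor:
  fixes d1 d2 q :: nat and D R W :: real
  assumes "0 < D" and "real (d1 * d2) \<le> R" and "real q \<le> W" and "D < real d1 * real q"
  shows "real (d1 * d2^2) \<le> W * R^2 / D" and "D \<le> real d1 * W"
proof -
  have "real (d1 * d2^2) * D \<le> real (d1 * d2^2) * (real d1 * real q)"
    using assms(4) by (intro mult_left_mono) auto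
  also have "\<dots> = real (d1 * d2)^2 * real q"
    by (simp add: power2_eq_square)
  also have "\<dots> \<le> R^2 * W"
    by (intro mult_mono power_mono assms(2,3)) auto
  finally show "real (d1 * d2^2) \<le> W * R^2 / D"
    using assms(1) by (simp add: field_simps)
  show "D \<le> real d1 * W"
    using assms(4) mult_left_mono[OF assms(3), of "real d1"] by simp
qed

lemma exists_balanced_extension:
  fixes c e :: nat and S :: "nat set" and D R W y :: real
  assumes "finite S" and "\<forall>q\<in>S. 1 < q \<and> real q \<le> W" and "0 < D" and "real c \<le> D"
    and "real (c * e * \<Prod>S) \<le> R" and "y * W \<le> D" and "0 < W"
  shows "\<exists>d1 d2. c dvd d1 \<and> d1 * d2 = c * e * \<Prod>S \<and> real d1 \<le> D \<and>
           (d2 = e \<or> real (d1 * d2^2) \<le> W * R^2 / D \<and> y \<le> real d1)"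
proof -
  obtain A where A: "A \<subseteq> S" "real (c * \<Prod>A) \<le> D"
    and overshoot: "\<forall>q\<in>S - A. real (c * \<Prod>A) * real q > D"
    using exists_maximal_subproduct[of S c D] assms(1,2,4) by auto
  define d1 where "d1 = c * \<Prod>A"
  define d2 where "d2 = e * \<Prod>(S - A)"
  have "\<Prod>S = \<Prod>A * \<Prod>(S - A)"
    using prod.subset_diff[OF A(1) assms(1)] by (metis mult.commute)
  then have prod: "d1 * d2 = c * e * \<Prod>S"
    unfolding d1_def d2_def by (simp only: mult.assoc mult.left_commute)
  have "d2 = e \<or> real (d1 * d2^2) \<le> W * R^2 / D \<and> y \<le> real d1"
  proof (cases "S - A = {}")
    case False
    then obtain q where q: "q \<in> S - A"
      by blast
    have size: "real (d1 * d2) \<le> R"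
      using assms(5) by (simp only: prod)
    have small: "real q \<le> W"
      using assms(2) q by blast
    have "D < real d1 * real q"
      unfolding d1_def using overshoot q by blast
    note bounds = split_bounds_of_overshooting_factor[OF assms(3) size small this]
    have "y * W \<le> real d1 * W"
      using bounds(2) assms(6) by linarith
    then have "y \<le> real d1"
      using assms(7) by (simp add: mult_le_cancel_right)
    then show ?thesis
      using bounds(1) by blast
  next
    case True
    show ?thesis
      unfolding d2_def True by simp
  qed
  moreover have "c dvd d1" and "real d1 \<le> D"
    using A(2) by (simp_all add: d1_def)
  ultimately show ?thesis
    using prod by blast
qed

lemma unsplit_product_bound:
  fixes d :: nat and D R W :: real
  assumes "real d \<le> R" and "D \<le> R" and "1 \<le> D" and "1 \<le> W"
  shows "real d \<le> W * R^2 / D"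
proof -
  have "real d * D \<le> R * R"
    using assms(1-3) by (intro mult_mono) auto
  also have "\<dots> \<le> W * R^2"
    using mult_right_mono[OF assms(4), of "R^2"] by (simp add: power2_eq_square)
  finally show ?thesis
    using assms(3) by (simp add: field_simps)
qed

lemma split_with_two_largest_primes:
  fixes p1 p2 :: nat and S :: "nat set" and D R W y :: real
  assumes S: "finite S" "\<forall>q\<in>S. 1 < q \<and> real q \<le> W"
    and p: "0 < p2" "p2 < p1" "real p1 \<le> D" "real (p1 * p2^2) \<le> R"
    and d: "D < real (p1 * p2 * \<Prod>S)" "real (p1 * p2 * \<Prod>S) \<le> R"
    and "D \<le> R" and "1 \<le> W" and y: "y * W \<le> D" "y * y \<le> D"
  shows "\<exists>d1 d2. p1 * p2 * \<Prod>S = d1 * d2 \<and> real d1 \<le> D \<and>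
           real (d1 * d2^2) \<le> W * R^2 / D \<and> (y \<le> real d1 \<or> d2 = 1)"
proof -
  have "1 \<le> real p1"
    using p(2) by auto
  then have "1 \<le> D" and "0 < D" and "0 < W"
    using p(3) \<open>1 \<le> W\<close> by linarith+
  note extension = exists_balanced_extension[OF S \<open>0 < D\<close> _ _ y(1) \<open>0 < W\<close>]
  show ?thesis
  proof (cases "real (p1 * p2) \<le> D")
    case True
    have "real (p1 * p2 * 1 * \<Prod>S) \<le> R"
      using d(2) by simp
    then obtain d1 d2 where split: "d1 * d2 = p1 * p2 * 1 * \<Prod>S" "real d1 \<le> D"
      and balanced: "d2 = 1 \<or> real (d1 * d2^2) \<le> W * R^2 / D \<and> y \<le> real d1"
      using extension[OF True] by blast
    have "real (d1 * d2^2) \<le> W * R^2 / D" if "d2 = 1"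
      using unsplit_product_bound[of d1 R D W] split d(2) that \<open>D \<le> R\<close> \<open>1 \<le> D\<close> \<open>1 \<le> W\<close> by simp
    then have "real (d1 * d2^2) \<le> W * R^2 / D"
      using balanced by blast
    moreover have "p1 * p2 * \<Prod>S = d1 * d2"
      using split(1) by simp
    ultimately show ?thesis
      using split(2) balanced by blast
  next
    case False
    obtain d1 d2 where split: "p1 dvd d1" "d1 * d2 = p1 * p2 * \<Prod>S" "real d1 \<le> D"
      and balanced: "d2 = p2 \<or> real (d1 * d2^2) \<le> W * R^2 / D \<and> y \<le> real d1"
      using extension[OF p(3) d(2)] by blast
    have "real (d1 * d2^2) \<le> W * R^2 / D \<and> y \<le> real d1" if "d2 = p2"
    proof
      have "real (d1 * d2^2) * D \<le> real (d1 * d2^2) * real (p1 * p2)"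
        using False by (intro mult_left_mono) auto
      also have "\<dots> = real (d1 * p2) * real (p1 * p2^2)"
        using that by (simp add: power2_eq_square algebra_simps)
      also have "\<dots> = real (p1 * p2 * \<Prod>S) * real (p1 * p2^2)"
        by (simp only: split(2)[unfolded that])
      also have "\<dots> \<le> R * R"
        using d(2) p(4) \<open>0 < D\<close> \<open>D \<le> R\<close> by (intro mult_mono) auto
      also have "\<dots> \<le> W * R^2"
        using mult_right_mono[OF \<open>1 \<le> W\<close>, of "R^2"] by (simp add: power2_eq_square)
      finally show "real (d1 * d2^2) \<le> W * R^2 / D"
        using \<open>0 < D\<close> by (simp add: field_simps)
      have "real p1 * real p2 < real p1 * real p1"
        using p(1,2) by simp
      then have "y^2 < real p1 ^ 2"
        using False y(2) unfolding power2_eq_square by simp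
      then have "y < real p1"
        by (rule power_less_imp_less_base) simp
      moreover have "p1 \<le> d1"
      proof (rule dvd_imp_le[OF split(1)])
        have "0 < \<Prod>S"
          using S(2) by (intro prod_pos) force
        then have "d1 * d2 \<noteq> 0"
          using split(2) p(1,2) by simp
        then show "0 < d1"
          by simp
      qed
      ultimately show "y \<le> real d1"
        by simp
    qed
    then have "real (d1 * d2^2) \<le> W * R^2 / D \<and> y \<le> real d1"
      using balanced by blast
    then show ?thesis
      using split(2,3) by (metis mult.commute)
  qed
qed

lemma prime_product_split:
  fixes ps :: "nat list" and D R W y :: real
  assumes ps: "ps \<noteq> []" "\<forall>p\<in>set ps. prime p" "sorted_wrt (>) ps"
    and hd: "real (hd ps) \<le> D" and "D \<le> R" and size: "real (prod_list ps) \<le> R"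
    and second: "2 \<le> length ps \<Longrightarrow> real (hd ps * (ps ! 1)^2) \<le> R"
    and "1 \<le> W" and "R \<le> W ^ 3" and "y * W \<le> D" and "y * y \<le> D"
  shows "\<exists>d1 d2. 0 < d1 \<and> 0 < d2 \<and> prod_list ps = d1 * d2 \<and> real d1 \<le> D \<and>
           real (d1 * d2^2) \<le> W * R^2 / D \<and> (y \<le> real d1 \<or> d2 = 1)"
proof -
  define d where "d = prod_list ps"
  have "0 < d"
    using ps(2) unfolding d_def by (metis gr0I not_prime_0 prod_list_zero_iff)
  have "1 \<le> D"
    using hd ps by (metis hd_in_set prime_ge_1_nat of_nat_1 of_nat_le_iff order_trans)
  show ?thesis
  proof (cases "real d \<le> D")
    case True
    then show ?thesis
      using unsplit_product_bound[of d R D W] size \<open>0 < d\<close> \<open>D \<le> R\<close> \<open>1 \<le> D\<close> \<open>1 \<le> W\<close>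
      by (intro exI[of _ d] exI[of _ 1]) (simp add: d_def)
  next
    case False
    then obtain p1 p2 rest where ps_eq: "ps = p1 # p2 # rest"
      using ps(1) hd by (cases ps rule: remdups_adj.cases) (auto simp: d_def)
    define S where "S = set rest"
    have "distinct rest"
      using ps(3) ps_eq by (simp add: distinct_if_sorted_wrt_greater)
    then have d_eq: "d = p1 * p2 * \<Prod>S"
      by (simp add: d_def ps_eq S_def prod.distinct_set_conv_list)
    have small: "\<forall>q\<in>S. 1 < q \<and> real q \<le> W"
    proof
      fix q assume q: "q \<in> S"
      have "real (prod_list (p1 # p2 # rest)) \<le> W ^ 3"
        using size \<open>R \<le> W ^ 3\<close> ps_eq by simp
      moreover have "\<forall>p\<in>set rest. 0 < p"
        using ps(2) ps_eq by (simp add: prime_gt_0_nat)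
      ultimately have "real q \<le> W"
        using remaining_prime_le_cube_root ps(3) q by (simp add: ps_eq S_def)
      moreover have "1 < q"
        using ps(2) q ps_eq S_def prime_gt_1_nat by simp
      ultimately show "1 < q \<and> real q \<le> W"
        by simp
    qed
    have "0 < p2" "p2 < p1" "real p1 \<le> D" "real (p1 * p2^2) \<le> R"
      using ps(2,3) hd second by (auto simp: ps_eq prime_gt_0_nat)
    moreover have "D < real (p1 * p2 * \<Prod>S)" "real (p1 * p2 * \<Prod>S) \<le> R"
      unfolding d_eq[symmetric] using False size by (auto simp: d_def)
    ultimately obtain d1 d2 where "d = d1 * d2" "real d1 \<le> D" "real (d1 * d2^2) \<le> W * R^2 / D"
      "y \<le> real d1 \<or> d2 = 1"
      using split_with_two_largest_primes[OF _ small] \<open>D \<le> R\<close> \<open>1 \<le> W\<close> \<open>y * W \<le> D\<close>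
        \<open>y * y \<le> D\<close> by (metis S_def d_eq finite_set)
    with \<open>0 < d\<close> show ?thesis
      by (auto simp: d_def)
  qed
qed

lemma exponent_inequalities:
  fixes \<epsilon> \<theta> \<rho> T \<zeta> :: real
  assumes "0 < \<epsilon>" and "\<epsilon> < 1/50" and "0 \<le> \<theta>" and "\<theta> \<le> 1/30"
    and "\<rho> = 3/7 * (1 - 4*\<theta>) - \<epsilon>" and "T = 1 - 4*\<theta> - 2*\<epsilon>^2" and "\<zeta> = 1/3 - 2*\<theta> - 2*\<epsilon>^2"
  shows "0 \<le> T - 2*\<rho>" and "\<rho> \<le> 3 * (T - 2*\<rho>)" and "1/10 + (T - 2*\<rho>) \<le> \<zeta>" and "1/10 + 1/10 \<le> \<zeta>"
proof -
  have "\<epsilon>^2 \<le> \<epsilon> / 50"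
    using assms(1,2) by (simp add: power2_eq_square)
  note facts = this assms
  show "0 \<le> T - 2*\<rho>"
    using facts by argo
  show "\<rho> \<le> 3 * (T - 2*\<rho>)"
    using facts by argo
  show "1/10 + (T - 2*\<rho>) \<le> \<zeta>"
    using facts by argo
  show "1/10 + 1/10 \<le> \<zeta>"
    using facts by argo
qed

lemma D_minus_SEM_split:
  fixes x \<epsilon> \<theta> z2 D :: real and d :: nat
  assumes "0 < \<epsilon>" and "\<epsilon> < 1/50" and "1 \<le> x" and "0 \<le> \<theta>" and "\<theta> \<le> 1/30"
    and z2: "z2 \<le> x powr (1/3 - 2*\<theta> - 2*\<epsilon>^2)"
    and D: "x powr (1/3 - 2*\<theta> - 2*\<epsilon>^2) \<le> D" "D \<le> x powr (3/7 * (1 - 4*\<theta>) - \<epsilon>)"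
    and d: "d \<in> D_minus_SEM x (3/7 * (1 - 4*\<theta>) - \<epsilon>) z2"
  shows "\<exists>d1 d2 :: nat. d1 > 0 \<and> d2 > 0 \<and> d = d1 * d2 \<and> real d1 \<le> D \<and>
           real (d1 * d2^2) \<le> x powr (1 - 4*\<theta> - 2*\<epsilon>^2) / D \<and>
           (real d1 \<ge> x powr (1/10) \<or> d2 = 1)"
proof -
  define \<rho> T \<zeta> where "\<rho> = 3/7 * (1 - 4*\<theta>) - \<epsilon>" and "T = 1 - 4*\<theta> - 2*\<epsilon>^2"
    and "\<zeta> = 1/3 - 2*\<theta> - 2*\<epsilon>^2"
  note exponents = exponent_inequalities[OF assms(1,2,4,5) \<rho>_def T_def \<zeta>_def]
  define R W y where "R = x powr \<rho>" and "W = x powr (T - 2*\<rho>)" and "y = x powr (1/10)"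
  have "x \<noteq> 0"
    using \<open>1 \<le> x\<close> by simp
  have "1 \<le> W"
    using exponents(1) \<open>1 \<le> x\<close> by (simp add: W_def ge_one_powr_ge_zero)
  have "W ^ 3 = x powr (3 * (T - 2*\<rho>))"
    using \<open>x \<noteq> 0\<close> by (simp add: W_def powr_power)
  then have "R \<le> W ^ 3"
    using exponents(2) \<open>1 \<le> x\<close> by (simp add: R_def powr_mono)
  have "y * W \<le> x powr \<zeta>" and "y * y \<le> x powr \<zeta>"
    using exponents(3,4) \<open>1 \<le> x\<close> by (simp_all add: y_def W_def flip: powr_add) (auto intro: powr_mono)
  then have "y * W \<le> D" and "y * y \<le> D"
    using D(1) by (simp_all add: \<zeta>_def)
  have "x powr T = W * R^2"
    using \<open>x \<noteq> 0\<close> by (simp add: R_def W_def powr_power flip: powr_add)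
  obtain ps where ps: "d = prod_list ps" "ps \<noteq> []" "\<forall>p\<in>set ps. prime p" "sorted_wrt (>) ps"
    "real (hd ps) \<le> z2" "real (prod_list ps) \<le> R"
    and sem: "\<forall>k\<ge>1. 2 * k \<le> length ps \<longrightarrow>
                real (prod_list (take (2 * k - 1) ps) * (ps ! (2 * k - 1))^2) \<le> R"
    using d unfolding D_minus_SEM_def R_def \<rho>_def by blast
  have "real (hd ps * (ps ! 1)^2) \<le> R" if "2 \<le> length ps"
    using sem[rule_format, of 1] that ps(2) by (cases ps) auto
  moreover have "real (hd ps) \<le> D" and "D \<le> R"
    using ps(5) z2 D by (simp_all add: R_def \<rho>_def)
  ultimately show ?thesis
    using prime_product_split[OF ps(2-4) _ _ ps(6) _ \<open>1 \<le> W\<close> \<open>R \<le> W ^ 3\<close> \<open>y * W \<le> D\<close> \<open>y * y \<le> D\<close>]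
    by (simp add: ps(1) y_def T_def[symmetric] \<open>x powr T = W * R^2\<close>)
qed

theorem lemma10:
  shows "\<exists>\<epsilon>0>0. \<forall>\<epsilon>::real. 0 < \<epsilon> \<and> \<epsilon> < \<epsilon>0 \<longrightarrow>
    (\<exists>x0. \<forall>x::real. x \<ge> x0 \<longrightarrow>
      (\<forall>\<theta>::real. 0 \<le> \<theta> \<and> \<theta> \<le> 1/30 \<longrightarrow>
        (\<forall>z2::real. z2 \<le> x powr (1/3 - 2*\<theta> - 2*\<epsilon>^2) \<longrightarrow>
          (\<forall>D::real. x powr (1/3 - 2*\<theta> - 2*\<epsilon>^2) \<le> D \<and>
                     D \<le> x powr (3/7 * (1 - 4*\<theta>) - \<epsilon>) \<longrightarrow>
            (\<forall>d \<in> D_minus_SEM x (3/7 * (1 - 4*\<theta>) - \<epsilon>) z2.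
               \<exists>d1 d2 :: nat. d1 > 0 \<and> d2 > 0 \<and> d = d1 * d2 \<and>
                 real d1 \<le> D \<and>
                 real (d1 * d2^2) \<le> x powr (1 - 4*\<theta> - 2*\<epsilon>^2) / D \<and>
                 (real d1 \<ge> x powr (1/10) \<or> d2 = 1))))))"
  by (rule exI[of _ "1/50"], intro conjI allI impI D_minus_SEM_split exI[of _ 1] ballI) auto

end
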